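(* Let $n$ and $k$ be positive integers with $k\le n$, and let $m$ be a nonnegative integer. Consider an airplane with $n$ seats numbered $1,\dots,n$ and $n$ passengers numbered $1,\dots,n$, passenger $i$ being assigned seat $i$. Passengers board one at a time in the order $1,2,\dots,n$. Passengers $1,\dots,k$ are absent-minded: when it is such a passenger's turn, he chooses a seat uniformly at random among the currently unoccupied seats. Each passenger $i>k$ sits in seat $i$ if it is unoccupied, and otherwise chooses a seat uniformly at random among the currently unoccupied seats. Call a passenger misseated if he does not end up in his assigned seat. Then the probability $P_{n,k}(m)$ that exactly $m$ passengers are misseated is \[ P_{n,k}(m)=\frac{(-1)^m(n-k)!}{n!}\binom{k}{m}+\frac{1}{n!}\sum_{s=1}^{k}\left[{n-k+1 \atop m-s+1}\right]\binom{k}{s}\, s!\sum_{\ell=1}^{s}\frac{(-1)^{s-\ell}\,\ell^{m-s}}{(s-\ell)!}. \]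
   Context: Here $\left[{i \atop j}\right]$ denotes the unsigned Stirling number of the first kind (the number of permutations of $i$ elements with exactly $j$ disjoint cycles), with the conventions $\left[{p \atop 0}\right]=0$ and $\left[{p \atop -q}\right]=0$ for positive integers $p,q$. The binomial coefficient $\binom{k}{m}$ is interpreted as $0$ when $m>k$. *)

theory Defs
  imports "HOL-Probability.Probability" "HOL-Combinatorics.Stirling"
begin

text \<open>Boarding process. board n k r S: distribution of the number of misseated
passengers among the last r passengers (passengers n-r+1, ..., n), given that
the set S of seats is already occupied.\<close>
fun board :: "nat \<Rightarrow> nat \<Rightarrow> nat \<Rightarrow> nat set \<Rightarrow> nat pmf" where
  "board n k 0 S = return_pmf 0"
| "board n k (Suc r) S =
     (let i = n - r in
      if i \<le> k \<or> i \<in> S then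
        pmf_of_set ({1..n} - S) \<bind>
          (\<lambda>j. map_pmf (\<lambda>c. c + (if j = i then 0 else 1)) (board n k r (insert j S)))
      else board n k r (insert i S))"

definition P :: "nat \<Rightarrow> nat \<Rightarrow> nat \<Rightarrow> real" where
  "P n k m = pmf (board n k n {}) m"

definition stirl :: "nat \<Rightarrow> int \<Rightarrow> nat" where
  "stirl p j = (if j < 0 then 0 else stirling p (nat j))"

end

theory Submission
  imports Defs
begin

text \<open>
  Write M for the number of misseated passengers. When i passengers have boarded and occupy the
  seat set S, and r = n - i passengers remain, r! times the generating function of the misseated
  passengers among the remaining ones is a polynomial in x that depends on S only through the
  numbers of free and of taken seats of the absent-minded passengers still to board, the number
  of taken seats of regular passengers, and a product over the regular seats recording which of
  them are taken. One boarding step, a uniform choice among the free seats or a regular passenger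
  taking his own seat, preserves this form, because summing over the regular seats the displaced
  passenger may pick telescopes. For the empty plane this gives
    n! E[x^M] = sum over t <= k of (k choose t) t! x^t (1 - x)^(k - t) (tx + 1)(tx + 2)...(tx + n - k),
  and expanding (1 - x)^(k - t) binomially and the rising factorial by Stirling numbers of the first
  kind yields the coefficients of the theorem.
\<close>

section \<open>Probability generating functions\<close>

definition pgf :: "nat pmf \<Rightarrow> real \<Rightarrow> real" where
  "pgf p x = measure_pmf.expectation p (\<lambda>c. x ^ c)"

lemma pgf_return_pmf [simp]: "pgf (return_pmf c) x = x ^ c"
  by (simp add: pgf_def)

lemma pgf_map_add: "pgf (map_pmf (\<lambda>c. c + e) p) x = x ^ e * pgf p x"
  by (simp add: pgf_def power_add mult.commute)

lemma pgf_bind_pmf_of_set: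
  assumes "finite A" "A \<noteq> {}" "\<And>y. y \<in> A \<Longrightarrow> finite (set_pmf (f y))"
  shows "pgf (pmf_of_set A \<bind> f) x = (\<Sum>y\<in>A. pgf (f y) x) / card A"
proof -
  have "pgf (pmf_of_set A \<bind> f) x = (\<Sum>y\<in>A. pgf (f y) x /\<^sub>R card A)"
    unfolding pgf_def by (rule pmf_expectation_bind_pmf_of_set[OF assms(2,1,3)])
  then show ?thesis
    by (simp add: sum_distrib_left divide_inverse_commute)
qed

lemma pgf_eq_sum:
  assumes "set_pmf p \<subseteq> {..N}"
  shows "pgf p x = (\<Sum>m\<le>N. pmf p m * x ^ m)"
proof -
  have "pgf p x = (\<Sum>m\<le>N. x ^ m * pmf p m)"
    unfolding pgf_def by (rule integral_measure_pmf_real) (use assms in auto)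
  then show ?thesis
    by (simp add: mult.commute)
qed

section \<open>Weights of the boarding states\<close>

lemma prod_diff_telescope:
  fixes A B :: "'a::linorder \<Rightarrow> 'b::comm_ring_1"
  assumes "finite I"
  shows "(\<Prod>c\<in>I. B c) - (\<Prod>c\<in>I. A c) =
    (\<Sum>c0\<in>I. (B c0 - A c0) * (\<Prod>c\<in>{c\<in>I. c < c0}. A c) * (\<Prod>c\<in>{c\<in>I. c0 < c}. B c))"
  using assms
proof (induction I rule: finite_linorder_max_induct)
  case (insert b I)
  let ?term = "\<lambda>J c0. (B c0 - A c0) * (\<Prod>c\<in>{c\<in>J. c < c0}. A c) * (\<Prod>c\<in>{c\<in>J. c0 < c}. B c)"
  have below: "{c \<in> insert b I. c < b} = I" and above: "{c \<in> insert b I. b < c} = {}"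
    using insert.hyps by auto
  have step: "?term (insert b I) c0 = B b * ?term I c0" if "c0 \<in> I" for c0
  proof -
    have "{c \<in> insert b I. c < c0} = {c \<in> I. c < c0}" "{c \<in> insert b I. c0 < c} = insert b {c \<in> I. c0 < c}"
      using insert.hyps that by auto
    moreover have "b \<notin> {c \<in> I. c0 < c}" "finite {c \<in> I. c0 < c}"
      using insert.hyps by auto
    ultimately show ?thesis
      by (simp add: mult_ac)
  qed
  have "(\<Sum>c0\<in>insert b I. ?term (insert b I) c0) = ?term (insert b I) b + (\<Sum>c0\<in>I. ?term (insert b I) c0)"
    using insert.hyps by (intro sum.insert) auto
  also have "(\<Sum>c0\<in>I. ?term (insert b I) c0) = (\<Sum>c0\<in>I. B b * ?term I c0)"
    by (rule sum.cong[OF refl step])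
  also have "?term (insert b I) b + (\<Sum>c0\<in>I. B b * ?term I c0)
      = (B b - A b) * (\<Prod>c\<in>I. A c) + B b * (\<Sum>c0\<in>I. ?term I c0)"
    unfolding below above by (simp add: sum_distrib_left)
  also have "\<dots> = (\<Prod>c\<in>insert b I. B c) - (\<Prod>c\<in>insert b I. A c)"
    using insert by (auto simp: algebra_simps)
  finally show ?case ..
qed simp

text \<open>
  For k <= b, fact (card (S \<inter> {b<..n})) * tail_weight n b S 0 x is (n - b)! times the
  generating function of the misseated passengers among b + 1, ..., n once the seats S are
  taken (board_weight_regular and pgf_board). The shift l is what makes sum_tail_weight_insert
  telescope.
\<close>

definition tail_weight :: "nat \<Rightarrow> nat \<Rightarrow> nat set \<Rightarrow> nat \<Rightarrow> real \<Rightarrow> real" where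
  "tail_weight n b S l x =
    (\<Prod>c\<in>{b<..n}. if c \<in> S then x else real (n - c + 1) + real (card (S \<inter> {b<..<c}) + l) * x)"

lemma tail_weight_insert_le:
  assumes "y \<le> b"
  shows "tail_weight n b (insert y S) l x = tail_weight n b S l x"
proof -
  have "insert y S \<inter> {b<..<c} = S \<inter> {b<..<c}" for c
    using assms by auto
  then show ?thesis
    unfolding tail_weight_def using assms by (intro prod.cong) auto
qed

lemma tail_weight_empty: "tail_weight n b {} l x = pochhammer (real l * x + 1) (n - b)"
proof -
  have "tail_weight n b {} l x = (\<Prod>i<n - b. 1 + real l * x + real i)"
    unfolding tail_weight_def
    by (rule prod.reindex_bij_witness[where i = "\<lambda>i. n - i" and j = "\<lambda>c. n - c"]) auto
  then show ?thesis
    by (simp add: pochhammer_prod atLeast0LessThan add_ac)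
qed

lemma tail_weight_top [simp]: "tail_weight n n S l x = 1"
  by (simp add: tail_weight_def)

lemma tail_weight_Suc_mem:
  assumes "i < n" "Suc i \<in> S"
  shows "tail_weight n i S l x = x * tail_weight n (Suc i) S (Suc l) x"
proof -
  have "card (S \<inter> {i<..<c}) = Suc (card (S \<inter> {Suc i<..<c}))" if "Suc i < c" for c
  proof -
    have "S \<inter> {i<..<c} = insert (Suc i) (S \<inter> {Suc i<..<c})"
      using assms that by auto
    then show ?thesis by simp
  qed
  moreover have "{i<..n} = insert (Suc i) {Suc i<..n}"
    using assms by auto
  ultimately show ?thesis
    unfolding tail_weight_def using assms by (auto intro!: prod.cong)
qed

lemma tail_weight_Suc_not_mem:
  assumes "i < n" "Suc i \<notin> S"
  shows "tail_weight n i S l x = (real (n - i) + real l * x) * tail_weight n (Suc i) S l x"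
proof -
  have same: "S \<inter> {i<..<c} = S \<inter> {Suc i<..<c}" for c
    using assms by auto (metis Suc_lessI)
  have "{i<..n} = insert (Suc i) {Suc i<..n}"
    using assms by auto
  then show ?thesis
    unfolding tail_weight_def same using assms by (simp add: Suc_diff_Suc)
qed

lemma sum_tail_weight_insert:
  "(\<Sum>c0\<in>{b<..n} - S. tail_weight n b (insert c0 S) l x) = tail_weight n b S (Suc l) x - tail_weight n b S l x"
proof -
  define A where "A c = (if c \<in> S then x else real (n - c + 1) + real (card (S \<inter> {b<..<c}) + l) * x)" for c
  define B where "B c = (if c \<in> S then x else real (n - c + 1) + real (card (S \<inter> {b<..<c}) + Suc l) * x)" for c
  have below: "{c \<in> {b<..n}. c < c0} = {b<..<c0}" and above: "{c \<in> {b<..n}. c0 < c} = {c0<..n}"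
    if "c0 \<in> {b<..n}" for c0
    using that by auto
  have split: "tail_weight n b (insert c0 S) l x = (B c0 - A c0) * (\<Prod>c\<in>{b<..<c0}. A c) * (\<Prod>c\<in>{c0<..n}. B c)"
    if c0: "c0 \<in> {b<..n} - S" for c0
  proof -
    let ?F = "\<lambda>c. if c \<in> insert c0 S then x else real (n - c + 1) + real (card (insert c0 S \<inter> {b<..<c}) + l) * x"
    have "{b<..n} = {b<..<c0} \<union> {c0} \<union> {c0<..n}"
      using c0 by auto
    then have "tail_weight n b (insert c0 S) l x = (\<Prod>c\<in>{b<..<c0}. ?F c) * ?F c0 * (\<Prod>c\<in>{c0<..n}. ?F c)"
      unfolding tail_weight_def by (simp only:) (subst prod.union_disjoint; auto)+
    moreover have "(\<Prod>c\<in>{b<..<c0}. ?F c) = (\<Prod>c\<in>{b<..<c0}. A c)"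
    proof (intro prod.cong refl)
      fix c assume "c \<in> {b<..<c0}"
      moreover have "insert c0 S \<inter> {b<..<c} = S \<inter> {b<..<c}" using calculation by auto
      ultimately show "?F c = A c" by (auto simp: A_def)
    qed
    moreover have "(\<Prod>c\<in>{c0<..n}. ?F c) = (\<Prod>c\<in>{c0<..n}. B c)"
    proof (intro prod.cong refl)
      fix c assume "c \<in> {c0<..n}"
      moreover have "insert c0 S \<inter> {b<..<c} = insert c0 (S \<inter> {b<..<c})" using c0 calculation by auto
      ultimately show "?F c = B c" using c0 by (auto simp: B_def)
    qed
    moreover have "?F c0 = B c0 - A c0"
      using c0 by (simp add: A_def B_def algebra_simps)
    ultimately show ?thesis by (simp only: mult_ac)
  qed
  have "(\<Sum>c0\<in>{b<..n} - S. tail_weight n b (insert c0 S) l x)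
      = (\<Sum>c0\<in>{b<..n} - S. (B c0 - A c0) * (\<Prod>c\<in>{b<..<c0}. A c) * (\<Prod>c\<in>{c0<..n}. B c))"
    by (rule sum.cong) (simp_all add: split)
  also have "\<dots> = (\<Sum>c0\<in>{b<..n}. (B c0 - A c0) * (\<Prod>c\<in>{b<..<c0}. A c) * (\<Prod>c\<in>{c0<..n}. B c))"
    by (rule sum.mono_neutral_left) (auto simp: A_def B_def)
  also have "\<dots> = (\<Prod>c\<in>{b<..n}. B c) - (\<Prod>c\<in>{b<..n}. A c)"
    unfolding prod_diff_telescope[OF finite_greaterThanAtMost]
    by (rule sum.cong[OF refl]) (simp only: below above)
  also have "\<dots> = tail_weight n b S (Suc l) x - tail_weight n b S l x"
    unfolding tail_weight_def A_def B_def by simp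
  finally show ?thesis .
qed

definition fwd_diff :: "(nat \<Rightarrow> real) \<Rightarrow> nat \<Rightarrow> real" where
  "fwd_diff Q l = Q (Suc l) - Q l"

fun absent_weight :: "real \<Rightarrow> nat \<Rightarrow> nat \<Rightarrow> nat \<Rightarrow> (nat \<Rightarrow> real) \<Rightarrow> real" where
  "absent_weight x 0 d a Q = fact (a + d) * x ^ d * Q d"
| "absent_weight x (Suc f) d a Q = (1 - x) * absent_weight x f d a Q + absent_weight x f (Suc d) a Q"

lemma absent_weight_closed_form:
  "absent_weight x f d a Q =
    (\<Sum>t\<le>f. real (f choose t) * fact (a + d + t) * x ^ (d + t) * (1 - x) ^ (f - t) * Q (d + t))"
proof (induction f arbitrary: d)
  case (Suc f)
  let ?summand = "\<lambda>c t. c * fact (a + d + t) * x ^ (d + t) * (1 - x) ^ (Suc f - t) * Q (d + t)"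
  have "(1 - x) * absent_weight x f d a Q = (\<Sum>t\<le>Suc f. ?summand (real (f choose t)) t)"
    unfolding Suc.IH by (simp add: sum_distrib_left Suc_diff_le algebra_simps binomial_eq_0)
  moreover have "absent_weight x f (Suc d) a Q
      = (\<Sum>t\<le>Suc f. ?summand (if t = 0 then 0 else real (f choose (t - 1))) t)"
    unfolding Suc.IH by (subst sum.atMost_Suc_shift) simp
  moreover have "?summand (real (f choose t)) t + ?summand (if t = 0 then 0 else real (f choose (t - 1))) t
      = ?summand (real (Suc f choose t)) t" for t
    by (cases t) (simp_all add: algebra_simps)
  ultimately show ?case
    by (simp only: absent_weight.simps sum.distrib[symmetric])
qed simp

lemma absent_weight_sum:
  assumes "finite Y"
  shows "absent_weight x f d a (\<lambda>l. \<Sum>y\<in>Y. Q y l) = (\<Sum>y\<in>Y. absent_weight x f d a (Q y))"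
  by (induction f arbitrary: d) (simp_all add: sum_distrib_left sum.distrib)

lemma absent_weight_Suc_taken:
  "absent_weight x f (Suc d) a Q =
    real (Suc d + a) * x * absent_weight x f d a Q + real f * x * absent_weight x (f - 1) (Suc d) a Q
    + x * absent_weight x f d (Suc a) (fwd_diff Q)"
proof (induction f arbitrary: d)
  case 0
  have "fact (a + Suc d) = real (Suc d + a) * (fact (a + d) :: real)"
    by (simp add: algebra_simps)
  then show ?case by (simp add: fwd_diff_def algebra_simps)
next
  case (Suc f)
  have unfold_f: "real f * absent_weight x f (Suc d) a Q
      = real f * ((1 - x) * absent_weight x (f - 1) (Suc d) a Q + absent_weight x (f - 1) (Suc (Suc d)) a Q)"
    by (cases f) auto
  show ?case
    unfolding absent_weight.simps(2)
    by (subst Suc.IH[of d], subst Suc.IH[of "Suc d"])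
      (use arg_cong[OF unfold_f, of "(*) x"] in \<open>simp add: algebra_simps\<close>)
qed

lemma absent_weight_Suc_free:
  "absent_weight x (Suc f) d a Q =
    real (d + a) * x * absent_weight x f d a Q + absent_weight x f d a Q
    + real f * x * absent_weight x (f - 1) (Suc d) a Q + x * absent_weight x f d (Suc a) (fwd_diff Q)"
  using absent_weight_Suc_taken[of x f d a Q] by (simp add: algebra_simps)

text \<open>
  After i passengers have boarded onto the seats S, the arguments of absent_weight are
  the numbers of free and of taken seats among those of the absent-minded passengers still to board,
  and the number of taken seats of regular passengers beyond max i k.
\<close>

definition board_weight :: "nat \<Rightarrow> nat \<Rightarrow> nat \<Rightarrow> nat set \<Rightarrow> real \<Rightarrow> real" where
  "board_weight n k i S x =
    absent_weight x (card ({i<..k} - S)) (card (S \<inter> {i<..k})) (card (S \<inter> {max i k<..n}))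
      (\<lambda>l. tail_weight n (max i k) S l x)"

section \<open>The generating function of the boarding process\<close>

lemma set_pmf_board: "set_pmf (board n k r S) \<subseteq> {..r}"
proof (induction r arbitrary: S)
  case (Suc r)
  have "set_pmf (map_pmf (\<lambda>c. c + e) (board n k r T)) \<subseteq> {..Suc r}" if "e \<le> 1" for e T
    using Suc[of T] that by force
  then show ?case
    by (auto simp only: board.simps Let_def set_bind_pmf split: if_splits) (use Suc in fastforce)+
qed simp

lemma finite_set_pmf_board: "finite (set_pmf (board n k r S))"
  by (rule finite_subset[OF set_pmf_board]) simp

lemma card_free_below_eq_card_taken_above:
  fixes S :: "nat set"
  assumes "S \<subseteq> {1..n}" "card S = i"
  shows "card ({1..i} - S) = card (S \<inter> {i<..n})"
proof -
  have "S = (S \<inter> {1..i}) \<union> (S \<inter> {i<..n})"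
    using assms(1) by auto
  then have "card S = card ((S \<inter> {1..i}) \<union> (S \<inter> {i<..n}))"
    by (rule arg_cong)
  also have "\<dots> = card (S \<inter> {1..i}) + card (S \<inter> {i<..n})"
    by (rule card_Un_disjoint) auto
  finally have "i = card ({1..i} \<inter> S) + card (S \<inter> {i<..n})"
    using assms(2) by (simp add: Int_commute)
  moreover have "card {1..i} = card ({1..i} \<inter> S) + card ({1..i} - S)"
    by (rule card_Int_Diff) simp
  ultimately show ?thesis
    by simp
qed

lemma card_Int_split:
  fixes S :: "nat set"
  assumes "i \<le> k" "k \<le> n"
  shows "card (S \<inter> {i<..n}) = card (S \<inter> {i<..k}) + card (S \<inter> {k<..n})"
proof -
  have "S \<inter> {i<..n} = (S \<inter> {i<..k}) \<union> (S \<inter> {k<..n})"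
    using assms by auto
  then have "card (S \<inter> {i<..n}) = card ((S \<inter> {i<..k}) \<union> (S \<inter> {k<..n}))"
    by (rule arg_cong)
  also have "\<dots> = card (S \<inter> {i<..k}) + card (S \<inter> {k<..n})"
    by (rule card_Un_disjoint) auto
  finally show ?thesis .
qed

lemma board_weight_regular:
  assumes "k \<le> i"
  shows "board_weight n k i S x = fact (card (S \<inter> {i<..n})) * tail_weight n i S 0 x"
  using assms by (simp add: board_weight_def max_absorb1)

lemma board_weight_insert_le:
  assumes "y \<le> j"
  shows "board_weight n k j (insert y S) x = board_weight n k j S x"
proof -
  have "{j<..k} - insert y S = {j<..k} - S" "insert y S \<inter> {j<..k} = S \<inter> {j<..k}"
    "insert y S \<inter> {max j k<..n} = S \<inter> {max j k<..n}"
    using assms by auto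
  moreover have "y \<le> max j k"
    using assms by simp
  ultimately show ?thesis
    by (simp add: board_weight_def tail_weight_insert_le)
qed

lemma board_weight_insert_absent:
  assumes "y \<in> {j<..k} - S"
  shows "board_weight n k j (insert y S) x =
    absent_weight x (card ({j<..k} - S) - 1) (Suc (card (S \<inter> {j<..k}))) (card (S \<inter> {k<..n}))
      (\<lambda>l. tail_weight n k S l x)"
proof -
  have "{j<..k} - insert y S = ({j<..k} - S) - {y}" "insert y S \<inter> {j<..k} = insert y (S \<inter> {j<..k})"
    "insert y S \<inter> {k<..n} = S \<inter> {k<..n}" "max j k = k"
    using assms by auto
  then show ?thesis
    using assms by (simp add: board_weight_def tail_weight_insert_le)
qed

lemma board_weight_insert_regular:
  assumes "y \<in> {k<..n} - S" "j \<le> k"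
  shows "board_weight n k j (insert y S) x =
    absent_weight x (card ({j<..k} - S)) (card (S \<inter> {j<..k})) (Suc (card (S \<inter> {k<..n})))
      (\<lambda>l. tail_weight n k (insert y S) l x)"
proof -
  have "{j<..k} - insert y S = {j<..k} - S" "insert y S \<inter> {j<..k} = S \<inter> {j<..k}"
    "insert y S \<inter> {k<..n} = insert y (S \<inter> {k<..n})" "max j k = k"
    using assms by auto
  then show ?thesis
    using assms by (simp add: board_weight_def)
qed

lemma sum_board_weight_absent:
  fixes S :: "nat set" and x :: real
  assumes "0 < j" "j \<le> k" "k \<le> n"
  defines "F \<equiv> card ({j<..k} - S)" and "D \<equiv> card (S \<inter> {j<..k})" and "A \<equiv> card (S \<inter> {k<..n})"
    and "Q \<equiv> \<lambda>l. tail_weight n k S l x"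
  shows "(\<Sum>y\<in>{1..n} - S. x ^ (if y = j then 0 else 1) * board_weight n k j (insert y S) x) =
    (real (card ({1..<j} - S)) * x + (if j \<in> S then 0 else 1)) * absent_weight x F D A Q
    + real F * x * absent_weight x (F - 1) (Suc D) A Q + x * absent_weight x F D (Suc A) (fwd_diff Q)"
proof -
  define g where "g y = x ^ (if y = j then 0 else 1) * board_weight n k j (insert y S) x" for y
  have "{1..n} - S = ({1..<j} - S) \<union> ({j} - S) \<union> ({j<..k} - S) \<union> ({k<..n} - S)"
    using assms(1-3) by auto
  then have seats: "sum g ({1..n} - S) =
      sum g ({1..<j} - S) + sum g ({j} - S) + sum g ({j<..k} - S) + sum g ({k<..n} - S)"
    using assms(2) by (simp only:) (subst sum.union_disjoint; auto)+
  have "board_weight n k j S x = absent_weight x F D A Q"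
    using assms(2) by (simp add: board_weight_def max_absorb2 F_def D_def A_def Q_def)
  then have below: "board_weight n k j (insert y S) x = absent_weight x F D A Q" if "y \<le> j" for y
    using that by (simp add: board_weight_insert_le)
  have "sum g ({1..<j} - S) = real (card ({1..<j} - S)) * x * absent_weight x F D A Q"
    by (simp add: g_def below)
  moreover have "sum g ({j} - S) = (if j \<in> S then 0 else 1) * absent_weight x F D A Q"
    by (cases "j \<in> S") (simp_all add: g_def below insert_Diff_if)
  moreover have "sum g ({j<..k} - S) = real F * x * absent_weight x (F - 1) (Suc D) A Q"
    by (simp add: g_def board_weight_insert_absent F_def D_def A_def Q_def)
  moreover have "sum g ({k<..n} - S)
      = x * absent_weight x F D (Suc A) (\<lambda>l. \<Sum>y\<in>{k<..n} - S. tail_weight n k (insert y S) l x)"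
    using assms(2) by (simp add: g_def board_weight_insert_regular absent_weight_sum sum_distrib_left F_def D_def A_def)
  moreover have "(\<lambda>l. \<Sum>y\<in>{k<..n} - S. tail_weight n k (insert y S) l x) = fwd_diff Q"
    by (simp add: fun_eq_iff sum_tail_weight_insert fwd_diff_def Q_def)
  ultimately show ?thesis
    unfolding g_def[symmetric] seats by (simp add: algebra_simps)
qed

lemma board_weight_absent_step:
  assumes "S \<subseteq> {1..n}" "card S = i" "Suc i \<le> k" "k \<le> n"
  shows "(\<Sum>y\<in>{1..n} - S. x ^ (if y = Suc i then 0 else 1) * board_weight n k (Suc i) (insert y S) x)
    = board_weight n k i S x"
proof -
  define F D A Q where "F = card ({Suc i<..k} - S)" and "D = card (S \<inter> {Suc i<..k})"
    and "A = card (S \<inter> {k<..n})" and "Q = (\<lambda>l. tail_weight n k S l x)"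
  have seats: "(\<Sum>y\<in>{1..n} - S. x ^ (if y = Suc i then 0 else 1) * board_weight n k (Suc i) (insert y S) x)
      = (real (card ({1..<Suc i} - S)) * x + (if Suc i \<in> S then 0 else 1)) * absent_weight x F D A Q
        + real F * x * absent_weight x (F - 1) (Suc D) A Q + x * absent_weight x F D (Suc A) (fwd_diff Q)"
    unfolding F_def D_def A_def Q_def using assms(3,4) by (intro sum_board_weight_absent) simp_all
  have low: "card ({1..<Suc i} - S) = card (S \<inter> {i<..k}) + A"
    using assms card_free_below_eq_card_taken_above[OF assms(1,2)] card_Int_split[of i k n S]
    by (simp add: A_def atLeastLessThanSuc_atLeastAtMost)
  have weight: "board_weight n k i S x = absent_weight x (card ({i<..k} - S)) (card (S \<inter> {i<..k})) A Q"
    using assms by (simp add: board_weight_def max_absorb2 A_def Q_def)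
  have split: "{i<..k} = insert (Suc i) {Suc i<..k}"
    using assms by auto
  show ?thesis
  proof (cases "Suc i \<in> S")
    case True
    then have "{i<..k} - S = {Suc i<..k} - S" "S \<inter> {i<..k} = insert (Suc i) (S \<inter> {Suc i<..k})"
      using split by auto
    then show ?thesis
      using seats True absent_weight_Suc_taken[of x F D A Q] low weight
      by (simp add: F_def D_def algebra_simps)
  next
    case False
    then have "{i<..k} - S = insert (Suc i) ({Suc i<..k} - S)" "S \<inter> {i<..k} = S \<inter> {Suc i<..k}"
      using split by auto
    then show ?thesis
      using seats False absent_weight_Suc_free[of x F D A Q] low weight
      by (simp add: F_def D_def algebra_simps)
  qed
qed

lemma board_weight_displaced_step:
  assumes "S \<subseteq> {1..n}" "card S = i" "k \<le> i" "Suc i \<in> S"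
  shows "(\<Sum>y\<in>{1..n} - S. x * board_weight n k (Suc i) (insert y S) x) = board_weight n k i S x"
proof -
  define A where "A = card (S \<inter> {Suc i<..n})"
  have "S \<inter> {i<..n} = insert (Suc i) (S \<inter> {Suc i<..n})"
    using assms by auto
  then have taken: "card (S \<inter> {i<..n}) = Suc A"
    by (simp add: A_def)
  have seats: "{1..n} - S = ({1..i} - S) \<union> ({Suc i<..n} - S)"
    using assms(1,4) by auto (metis le_SucE not_less)
  have "(\<Sum>y\<in>{1..i} - S. x * board_weight n k (Suc i) (insert y S) x)
      = (\<Sum>y\<in>{1..i} - S. x * board_weight n k (Suc i) S x)"
    by (intro sum.cong refl) (simp add: board_weight_insert_le)
  also have "\<dots> = real (Suc A) * x * fact A * tail_weight n (Suc i) S 0 x"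
    using assms taken card_free_below_eq_card_taken_above[OF assms(1,2)]
    by (simp add: board_weight_regular A_def)
  finally have "(\<Sum>y\<in>{1..i} - S. x * board_weight n k (Suc i) (insert y S) x)
      = real (Suc A) * x * fact A * tail_weight n (Suc i) S 0 x" .
  moreover have "(\<Sum>y\<in>{Suc i<..n} - S. x * board_weight n k (Suc i) (insert y S) x)
      = x * fact (Suc A) * (tail_weight n (Suc i) S 1 x - tail_weight n (Suc i) S 0 x)"
  proof -
    have "insert y S \<inter> {Suc i<..n} = insert y (S \<inter> {Suc i<..n})" if "y \<in> {Suc i<..n} - S" for y
      using that by auto
    then have "(\<Sum>y\<in>{Suc i<..n} - S. x * board_weight n k (Suc i) (insert y S) x)
        = (\<Sum>y\<in>{Suc i<..n} - S. x * fact (Suc A) * tail_weight n (Suc i) (insert y S) 0 x)"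
      using assms by (intro sum.cong refl) (simp add: board_weight_regular A_def)
    also have "\<dots> = x * fact (Suc A) * (\<Sum>y\<in>{Suc i<..n} - S. tail_weight n (Suc i) (insert y S) 0 x)"
      by (simp only: sum_distrib_left)
    finally show ?thesis
      by (simp add: sum_tail_weight_insert)
  qed
  moreover have "i < n"
    using assms(1,4) by auto
  then have "board_weight n k i S x = fact (Suc A) * (x * tail_weight n (Suc i) S 1 x)"
    using assms taken by (simp add: board_weight_regular tail_weight_Suc_mem)
  moreover have "(\<Sum>y\<in>{1..n} - S. x * board_weight n k (Suc i) (insert y S) x)
      = (\<Sum>y\<in>{1..i} - S. x * board_weight n k (Suc i) (insert y S) x)
        + (\<Sum>y\<in>{Suc i<..n} - S. x * board_weight n k (Suc i) (insert y S) x)"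
    unfolding seats by (rule sum.union_disjoint) auto
  ultimately show ?thesis
    by (simp add: algebra_simps)
qed

lemma board_weight_choose_step:
  assumes "S \<subseteq> {1..n}" "card S = i" "k \<le> n" "Suc i \<le> k \<or> Suc i \<in> S"
  shows "(\<Sum>y\<in>{1..n} - S. x ^ (if y = Suc i then 0 else 1) * board_weight n k (Suc i) (insert y S) x)
    = board_weight n k i S x"
proof (cases "Suc i \<le> k")
  case True
  then show ?thesis
    by (rule board_weight_absent_step[OF assms(1,2) _ assms(3)])
next
  case False
  then have "Suc i \<in> S"
    using assms(4) by simp
  then have "(\<Sum>y\<in>{1..n} - S. x ^ (if y = Suc i then 0 else 1) * board_weight n k (Suc i) (insert y S) x)
      = (\<Sum>y\<in>{1..n} - S. x * board_weight n k (Suc i) (insert y S) x)"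
    by (intro sum.cong) auto
  also have "\<dots> = board_weight n k i S x"
    using False \<open>Suc i \<in> S\<close> by (intro board_weight_displaced_step[OF assms(1,2)]) simp_all
  finally show ?thesis .
qed

lemma board_weight_own_seat_step:
  assumes "k \<le> i" "i < n" "Suc i \<notin> S"
  shows "real (n - i) * board_weight n k (Suc i) (insert (Suc i) S) x = board_weight n k i S x"
proof -
  have "S \<inter> {i<..n} = S \<inter> {Suc i<..n}"
    using assms(3) by auto (metis Suc_lessI)
  then show ?thesis
    using assms by (simp add: board_weight_regular tail_weight_insert_le tail_weight_Suc_not_mem)
qed

lemma pgf_board_Suc_choose:
  assumes "S \<subseteq> {1..n}" "card S = n - Suc r" "Suc r \<le> n" "n - r \<le> k \<or> n - r \<in> S"
  shows "real (Suc r) * pgf (board n k (Suc r) S) x =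
    (\<Sum>y\<in>{1..n} - S. x ^ (if y = n - r then 0 else 1) * pgf (board n k r (insert y S)) x)"
proof -
  have free: "finite ({1..n} - S)" "card ({1..n} - S) = Suc r"
    using assms by (auto simp: card_Diff_subset finite_subset)
  then have nonempty: "{1..n} - S \<noteq> {}"
    by (metis card.empty Zero_not_Suc)
  have "board n k (Suc r) S = pmf_of_set ({1..n} - S) \<bind>
      (\<lambda>y. map_pmf (\<lambda>c. c + (if y = n - r then 0 else 1)) (board n k r (insert y S)))"
    using assms(4) by (simp add: Let_def)
  also have "pgf \<dots> x = (\<Sum>y\<in>{1..n} - S. pgf (map_pmf (\<lambda>c. c + (if y = n - r then 0 else 1))
      (board n k r (insert y S))) x) / real (Suc r)"
    using free nonempty by (subst pgf_bind_pmf_of_set) (simp_all add: finite_set_pmf_board)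
  finally show ?thesis
    by (simp add: pgf_map_add)
qed

lemma pgf_board:
  assumes "k \<le> n" "r \<le> n" "S \<subseteq> {1..n}" "card S = n - r"
  shows "fact r * pgf (board n k r S) x = board_weight n k (n - r) S x"
  using assms(2-)
proof (induction r arbitrary: S)
  case 0
  then show ?case
    using assms(1) by (simp add: board_weight_regular)
next
  case (Suc r)
  define i where "i = n - Suc r"
  have i: "n - r = Suc i" "n - i = Suc r" "card S = i"
    using Suc.prems by (auto simp: i_def)
  have IH: "fact r * pgf (board n k r (insert y S)) x = board_weight n k (Suc i) (insert y S) x"
    if "y \<in> {1..n} - S" for y
  proof -
    have "card (insert y S) = n - r"
      using that Suc.prems i by (simp add: finite_subset)
    then show ?thesis
      using that Suc Suc.prems i by simp
  qed
  show ?case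
  proof (cases "Suc i \<le> k \<or> Suc i \<in> S")
    case True
    have "fact (Suc r) * pgf (board n k (Suc r) S) x
        = fact r * (real (Suc r) * pgf (board n k (Suc r) S) x)"
      by simp
    also have "\<dots> = (\<Sum>y\<in>{1..n} - S. x ^ (if y = Suc i then 0 else 1) * (fact r * pgf (board n k r (insert y S)) x))"
      using Suc.prems True i by (subst pgf_board_Suc_choose) (simp_all add: sum_distrib_left mult_ac)
    also have "\<dots> = (\<Sum>y\<in>{1..n} - S. x ^ (if y = Suc i then 0 else 1) * board_weight n k (Suc i) (insert y S) x)"
      using IH by (intro sum.cong) auto
    also have "\<dots> = board_weight n k i S x"
      using Suc.prems(2) assms(1) i True by (intro board_weight_choose_step) simp_all
    finally show ?thesis
      by (simp only: i_def)
  next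
    case False
    have "fact (Suc r) * pgf (board n k (Suc r) S) x = real (n - i) * (fact r * pgf (board n k r (insert (Suc i) S)) x)"
      using False i by (simp add: Let_def)
    also have "\<dots> = real (n - i) * board_weight n k (Suc i) (insert (Suc i) S) x"
      using False i by (simp add: IH)
    also have "\<dots> = board_weight n k i S x"
      using False i by (intro board_weight_own_seat_step) auto
    finally show ?thesis
      by (simp only: i_def)
  qed
qed

lemma pgf_board_initial:
  assumes "k \<le> n"
  shows "fact n * pgf (board n k n {}) x =
    (\<Sum>t\<le>k. real (k choose t) * fact t * x ^ t * (1 - x) ^ (k - t) * pochhammer (real t * x + 1) (n - k))"
proof -
  have "fact n * pgf (board n k n {}) x = absent_weight x k 0 0 (\<lambda>l. tail_weight n k {} l x)"
    using pgf_board[of k n n "{}" x] assms by (simp add: board_weight_def)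
  then show ?thesis
    by (simp add: absent_weight_closed_form tail_weight_empty)
qed

section \<open>Extracting the coefficients\<close>

lemma binomial_power_expansion:
  fixes x :: real
  assumes "t \<le> k"
  shows "real (k choose t) * fact t * x ^ t * (1 - x) ^ (k - t) =
    (\<Sum>s=t..k. real (k choose s) * fact s * (-1) ^ (s - t) / fact (s - t) * x ^ s)"
proof -
  have coeff: "real (k choose (t + j)) * fact (t + j) / fact j = real (k choose t) * fact t * real ((k - t) choose j)"
    if "t + j \<le> k" for j
  proof -
    have "real (k choose (t + j)) * fact (t + j) / fact j = real (k choose (t + j)) * (fact (t + j) / fact j)"
      by simp
    also have "fact (t + j) / fact j = fact t * real ((t + j) choose t)"
      by (simp add: fact_binomial)
    also have "real (k choose (t + j)) * (fact t * real ((t + j) choose t))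
        = fact t * (real (k choose (t + j)) * real ((t + j) choose t))"
      by (simp only: mult_ac)
    also have "real (k choose (t + j)) * real ((t + j) choose t) = real (k choose t) * real ((k - t) choose j)"
      using choose_mult[of t "t + j" k] that by (simp flip: of_nat_mult)
    finally show ?thesis
      by (simp only: mult_ac)
  qed
  have "(1 - x) ^ (k - t) = (\<Sum>j\<le>k - t. real ((k - t) choose j) * (-x) ^ j)"
    using binomial_ring[of "-x" 1 "k - t"] by simp
  then have "real (k choose t) * fact t * x ^ t * (1 - x) ^ (k - t)
      = (\<Sum>j\<le>k - t. real (k choose t) * fact t * real ((k - t) choose j) * ((-1) ^ j * (x ^ t * x ^ j)))"
    by (simp add: sum_distrib_left power_minus[of x] mult_ac)
  also have "\<dots> = (\<Sum>j\<le>k - t. real (k choose (t + j)) * fact (t + j) / fact j * ((-1) ^ j * (x ^ t * x ^ j)))"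
    using assms by (intro sum.cong refl) (simp add: coeff)
  also have "\<dots> = (\<Sum>s=t..k. real (k choose s) * fact s * (-1) ^ (s - t) / fact (s - t) * x ^ s)"
    using assms by (simp add: sum.atLeastAtMost_shift_0[where m = t and n = k] atLeast0AtMost power_add mult_ac)
  finally show ?thesis .
qed

lemma sum_binomial_mixture:
  fixes x :: real and P :: "nat \<Rightarrow> real"
  shows "(\<Sum>t\<le>k. real (k choose t) * fact t * x ^ t * (1 - x) ^ (k - t) * P t) =
    P 0 * (1 - x) ^ k
    + (\<Sum>s=1..k. real (k choose s) * fact s * x ^ s * (\<Sum>l=1..s. (-1) ^ (s - l) / fact (s - l) * P l))"
proof -
  define c where "c s t = real (k choose s) * fact s * (-1) ^ (s - t) / fact (s - t) * x ^ s * P t" for s t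
  have "{..k} = insert 0 {1..k}"
    by auto
  then have "(\<Sum>t\<le>k. real (k choose t) * fact t * x ^ t * (1 - x) ^ (k - t) * P t)
      = P 0 * (1 - x) ^ k + (\<Sum>t=1..k. real (k choose t) * fact t * x ^ t * (1 - x) ^ (k - t) * P t)"
    by simp
  also have "(\<Sum>t=1..k. real (k choose t) * fact t * x ^ t * (1 - x) ^ (k - t) * P t)
      = (\<Sum>t=1..k. \<Sum>s\<in>{s \<in> {1..k}. t \<le> s}. c s t)"
  proof (intro sum.cong refl)
    fix t assume "t \<in> {1..k}"
    then have "{s \<in> {1..k}. t \<le> s} = {t..k}"
      by auto
    with \<open>t \<in> {1..k}\<close> show "real (k choose t) * fact t * x ^ t * (1 - x) ^ (k - t) * P t = (\<Sum>s\<in>{s \<in> {1..k}. t \<le> s}. c s t)"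
      by (simp add: binomial_power_expansion sum_distrib_right c_def)
  qed
  also have "\<dots> = (\<Sum>s=1..k. \<Sum>t\<in>{t \<in> {1..k}. t \<le> s}. c s t)"
    by (rule sum.swap_restrict) simp_all
  also have "\<dots> = (\<Sum>s=1..k. real (k choose s) * fact s * x ^ s * (\<Sum>l=1..s. (-1) ^ (s - l) / fact (s - l) * P l))"
  proof (intro sum.cong refl)
    fix s assume "s \<in> {1..k}"
    then have "{t \<in> {1..k}. t \<le> s} = {1..s}"
      by auto
    then show "(\<Sum>t\<in>{t \<in> {1..k}. t \<le> s}. c s t) =
        real (k choose s) * fact s * x ^ s * (\<Sum>l=1..s. (-1) ^ (s - l) / fact (s - l) * P l)"
      by (simp add: sum_distrib_left c_def mult_ac)
  qed
  finally show ?thesis .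
qed

lemma stirling_Suc_pochhammer:
  "(\<Sum>j\<le>N. of_nat (stirling (Suc N) (Suc j)) * y ^ j) = (pochhammer (y + 1) N :: 'a::comm_semiring_1)"
proof (induction N)
  case (Suc N)
  have "(\<Sum>j\<le>Suc N. of_nat (stirling (Suc (Suc N)) (Suc j)) * y ^ j)
      = of_nat (Suc N) * (\<Sum>j\<le>Suc N. of_nat (stirling (Suc N) (Suc j)) * y ^ j)
        + (\<Sum>j\<le>Suc N. of_nat (stirling (Suc N) j) * y ^ j)"
    by (simp add: sum.distrib sum_distrib_left algebra_simps)
  also have "(\<Sum>j\<le>Suc N. of_nat (stirling (Suc N) (Suc j)) * y ^ j)
      = (\<Sum>j\<le>N. of_nat (stirling (Suc N) (Suc j)) * y ^ j)"
    by (simp add: sum.atMost_Suc)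
  also have "(\<Sum>j\<le>Suc N. of_nat (stirling (Suc N) j) * y ^ j)
      = y * (\<Sum>j\<le>N. of_nat (stirling (Suc N) (Suc j)) * y ^ j)"
    by (subst sum.atMost_Suc_shift) (simp add: sum_distrib_left algebra_simps)
  finally show ?case
    unfolding Suc.IH by (simp add: pochhammer_Suc algebra_simps)
qed simp

lemma sum_stirl_powi:
  fixes x y :: real
  assumes "s + N \<le> M"
  shows "(\<Sum>m\<le>M. real (stirl (Suc N) (int m - int s + 1)) * y powi (int m - int s) * x ^ m)
    = x ^ s * pochhammer (y * x + 1) N"
proof -
  define g where "g m = real (stirl (Suc N) (int m - int s + 1)) * y powi (int m - int s) * x ^ m" for m
  have "g m = 0" if "m < s" for m
    using that by (simp add: g_def stirl_def)
  then have "(\<Sum>m\<le>M. g m) = (\<Sum>m=s..M. g m)"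
    by (intro sum.mono_neutral_right) auto
  also have "\<dots> = (\<Sum>j\<le>M - s. g (s + j))"
    using assms by (simp add: sum.atLeastAtMost_shift_0[where m = s and n = M] atLeast0AtMost)
  also have "\<dots> = x ^ s * (\<Sum>j\<le>M - s. real (stirling (Suc N) (Suc j)) * (y * x) ^ j)"
  proof -
    have "g (s + j) = x ^ s * (real (stirling (Suc N) (Suc j)) * (y * x) ^ j)" for j
    proof -
      have "int (s + j) - int s + 1 = int (Suc j)" "int (s + j) - int s = int j"
        by simp_all
      then show ?thesis
        unfolding g_def by (simp only:) (simp add: stirl_def power_add power_mult_distrib mult_ac del: of_nat_Suc)
    qed
    then show ?thesis
      by (simp add: sum_distrib_left)
  qed
  also have "(\<Sum>j\<le>M - s. real (stirling (Suc N) (Suc j)) * (y * x) ^ j)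
      = (\<Sum>j\<le>N. real (stirling (Suc N) (Suc j)) * (y * x) ^ j)"
    using assms by (intro sum.mono_neutral_right) auto
  also have "\<dots> = pochhammer (y * x + 1) N"
    by (rule stirling_Suc_pochhammer)
  finally show ?thesis
    by (simp add: g_def)
qed

definition misseated_formula :: "nat \<Rightarrow> nat \<Rightarrow> nat \<Rightarrow> real" where
  "misseated_formula n k m =
    (-1) ^ m * fact (n - k) / fact n * real (k choose m)
    + 1 / fact n * (\<Sum>s = 1..k. real (stirl (n - k + 1) (int m - int s + 1))
        * real (k choose s) * fact s
        * (\<Sum>l = 1..s. (-1) ^ (s - l) * (real l powi (int m - int s)) / fact (s - l)))"

lemma sum_misseated_formula:
  assumes "k \<le> n" "n \<le> M"
  shows "fact n * (\<Sum>m\<le>M. misseated_formula n k m * x ^ m) =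
    fact (n - k) * (1 - x) ^ k
    + (\<Sum>s=1..k. real (k choose s) * fact s * x ^ s *
        (\<Sum>l=1..s. (-1) ^ (s - l) / fact (s - l) * pochhammer (real l * x + 1) (n - k)))"
proof -
  define h where "h s l m = real (stirl (n - k + 1) (int m - int s + 1)) * real l powi (int m - int s) * x ^ m"
    for s l m
  have expand: "fact n * misseated_formula n k m * x ^ m =
      fact (n - k) * (real (k choose m) * (-x) ^ m)
      + (\<Sum>s=1..k. real (k choose s) * fact s * (\<Sum>l=1..s. (-1) ^ (s - l) / fact (s - l) * h s l m))" for m
    by (simp add: misseated_formula_def h_def power_minus[of x] sum_distrib_left sum_distrib_right
        sum_divide_distrib algebra_simps)
  have inner: "(\<Sum>m\<le>M. h s l m) = x ^ s * pochhammer (real l * x + 1) (n - k)" if "s \<le> k" for s l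
  proof -
    have "s + (n - k) \<le> M"
      using that assms by auto
    then show ?thesis
      unfolding h_def using sum_stirl_powi[of s "n - k" M "real l" x] by simp
  qed
  have "fact n * (\<Sum>m\<le>M. misseated_formula n k m * x ^ m) =
      fact (n - k) * (\<Sum>m\<le>M. real (k choose m) * (-x) ^ m)
      + (\<Sum>s=1..k. real (k choose s) * fact s * (\<Sum>l=1..s. (-1) ^ (s - l) / fact (s - l) * (\<Sum>m\<le>M. h s l m)))"
    using expand by (simp add: sum_distrib_left sum.distrib mult.assoc sum.swap[of _ "{..M}"])
  also have "(\<Sum>m\<le>M. real (k choose m) * (-x) ^ m) = (\<Sum>m\<le>k. real (k choose m) * (-x) ^ m)"
    using assms by (intro sum.mono_neutral_right) auto
  also have "\<dots> = (1 - x) ^ k"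
    using binomial_ring[of "-x" 1 k] by simp
  also have "(\<Sum>s=1..k. real (k choose s) * fact s * (\<Sum>l=1..s. (-1) ^ (s - l) / fact (s - l) * (\<Sum>m\<le>M. h s l m)))
      = (\<Sum>s=1..k. real (k choose s) * fact s * x ^ s *
          (\<Sum>l=1..s. (-1) ^ (s - l) / fact (s - l) * pochhammer (real l * x + 1) (n - k)))"
    by (intro sum.cong refl) (simp add: inner sum_distrib_left mult_ac)
  finally show ?thesis .
qed

lemma pgf_board_eq_sum_misseated_formula:
  assumes "k \<le> n" "n \<le> M"
  shows "(\<Sum>m\<le>M. pmf (board n k n {}) m * x ^ m) = (\<Sum>m\<le>M. misseated_formula n k m * x ^ m)"
proof -
  have "fact n * (\<Sum>m\<le>M. pmf (board n k n {}) m * x ^ m) = fact n * pgf (board n k n {}) x"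
    using set_pmf_board[of n k n "{}"] assms(2) by (subst pgf_eq_sum[where N = M]) auto
  also have "\<dots> = (\<Sum>t\<le>k. real (k choose t) * fact t * x ^ t * (1 - x) ^ (k - t) * pochhammer (real t * x + 1) (n - k))"
    using assms(1) by (rule pgf_board_initial)
  also have "\<dots> = fact (n - k) * (1 - x) ^ k
    + (\<Sum>s=1..k. real (k choose s) * fact s * x ^ s *
        (\<Sum>l=1..s. (-1) ^ (s - l) / fact (s - l) * pochhammer (real l * x + 1) (n - k)))"
    by (simp add: sum_binomial_mixture flip: pochhammer_fact)
  also have "\<dots> = fact n * (\<Sum>m\<le>M. misseated_formula n k m * x ^ m)"
    using assms by (rule sum_misseated_formula[symmetric])
  finally show ?thesis
    by simp
qed

theorem theorem1:
  fixes n k m :: nat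
  assumes "0 < k" and "k \<le> n"
  shows "P n k m =
    (-1) ^ m * fact (n - k) / fact n * real (k choose m)
    + 1 / fact n * (\<Sum>s = 1..k. real (stirl (n - k + 1) (int m - int s + 1))
        * real (k choose s) * fact s
        * (\<Sum>l = 1..s. (-1) ^ (s - l) * (real l powi (int m - int s)) / fact (s - l)))"
proof -
  have "\<forall>x. (\<Sum>i\<le>max n m. pmf (board n k n {}) i * x ^ i) = (\<Sum>i\<le>max n m. misseated_formula n k i * x ^ i)"
    using assms(2) by (simp add: pgf_board_eq_sum_misseated_formula)
  then have "pmf (board n k n {}) m = misseated_formula n k m"
    by (subst (asm) polyfun_eq_coeffs) simp
  then show ?thesis
    unfolding P_def misseated_formula_def .
qed

end
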